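(* Let $\Gamma$ be a finite cyclic group of order $f$ with generator $\sigma$. The $\mathbb Z[\Gamma]$-submodules $M$ of $\mathbb Z[\Gamma]$ such that $\mathbb Z[\Gamma]/M$ is torsion-free over $\mathbb Z$ are exactly the modules $\overline M_{\underline d}$, for $\underline d$ ranging over the sets of positive divisors of $f$.
   Context: For $d\mid f$, $M_d=\bigoplus_{0\le l\le\varphi(d)-1}\mathbb Z\,P_{f,d}(\sigma)\sigma^l\subset\mathbb Z[\Gamma]$, where $P_{f,d}(X)=(X^f-1)/\Phi_d(X)$, $\Phi_d$ is the $d$-th cyclotomic polynomial and $\varphi$ Euler's totient function. For a set $\underline d$ of divisors of $f$, $M_{\underline d}=\bigoplus_{d\in\underline d}M_d$ and $\overline M_{\underline d}=\{\chi\in\mathbb Z[\Gamma]:a\chi\in M_{\underline d}\text{ for some }a\in\mathbb Z\smallsetminus\{0\}\}$. *)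

theory Defs
  imports "HOL-Analysis.Analysis" "HOL-Computational_Algebra.Polynomial" "HOL-Library.Function_Algebras" "HOL-Number_Theory.Totient"
begin

(* Z[Gamma] for Gamma cyclic of order f with generator sigma, identified with Z/fZ via
   sigma^i <-> i mod f.  Elements: coefficient functions supported on {0..<f}. *)
definition grp_ring :: "nat \<Rightarrow> (nat \<Rightarrow> int) set" where
  "grp_ring f = {a. \<forall>i\<ge>f. a i = 0}"

definition gmult :: "nat \<Rightarrow> (nat \<Rightarrow> int) \<Rightarrow> (nat \<Rightarrow> int) \<Rightarrow> (nat \<Rightarrow> int)" where
  "gmult f a b = (\<lambda>k. if k < f then (\<Sum>i<f. \<Sum>j<f. if (i + j) mod f = k then a i * b j else 0) else 0)"

definition is_submodule :: "nat \<Rightarrow> (nat \<Rightarrow> int) set \<Rightarrow> bool" where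
  "is_submodule f M \<longleftrightarrow> M \<subseteq> grp_ring f \<and> 0 \<in> M \<and>
     (\<forall>x\<in>M. \<forall>y\<in>M. x + y \<in> M) \<and>
     (\<forall>r\<in>grp_ring f. \<forall>x\<in>M. gmult f r x \<in> M)"

definition quotient_torsion_free :: "nat \<Rightarrow> (nat \<Rightarrow> int) set \<Rightarrow> bool" where
  "quotient_torsion_free f M \<longleftrightarrow>
     (\<forall>x\<in>grp_ring f. \<forall>a::int. a \<noteq> 0 \<longrightarrow> (\<lambda>k. a * x k) \<in> M \<longrightarrow> x \<in> M)"

definition cyclo_complex :: "nat \<Rightarrow> complex poly" where
  "cyclo_complex d = (\<Prod>k\<in>{k. k < d \<and> coprime k d}. [:- cis (2 * pi * real k / real d), 1:])"

definition cyclo :: "nat \<Rightarrow> int poly" where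
  "cyclo d = (THE p. map_poly of_int p = cyclo_complex d)"

definition Pfd :: "nat \<Rightarrow> nat \<Rightarrow> int poly" where
  "Pfd f d = (monom 1 f - 1) div cyclo d"

(* p(sigma) * sigma^l in Z[Gamma] *)
definition poly_sigma_shift :: "nat \<Rightarrow> int poly \<Rightarrow> nat \<Rightarrow> (nat \<Rightarrow> int)" where
  "poly_sigma_shift f p l = (\<lambda>k. if k < f then (\<Sum>i\<le>degree p. if (i + l) mod f = k then coeff p i else 0) else 0)"

definition Md :: "nat \<Rightarrow> nat \<Rightarrow> (nat \<Rightarrow> int) set" where
  "Md f d = {(\<Sum>l<totient d. (\<lambda>k. c l * poly_sigma_shift f (Pfd f d) l k)) | c :: nat \<Rightarrow> int. True}"

definition MD :: "nat \<Rightarrow> nat set \<Rightarrow> (nat \<Rightarrow> int) set" where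
  "MD f D = {(\<Sum>d\<in>D. x d) | x. \<forall>d\<in>D. x d \<in> Md f d}"

definition MDbar :: "nat \<Rightarrow> nat set \<Rightarrow> (nat \<Rightarrow> int) set" where
  "MDbar f D = {y \<in> grp_ring f. \<exists>a::int. a \<noteq> 0 \<and> (\<lambda>k. a * y k) \<in> MD f D}"

end

theory Submission
  imports Defs "Berlekamp_Zassenhaus.Poly_Mod"
begin

(*
  Identify Z[Gamma] with Z[X]/(X^f - 1), sigma being the class of X, and evaluate at the f-th
  roots of unity: the character chi_k maps x to x(zeta^k), where zeta = exp(2 pi i / f).  Over C,
  X^f - 1 is the product of the cyclotomic polynomials Phi_d for d | f, and P_{f,d}(zeta^k)
  vanishes exactly when zeta^k does not have order d.  Hence Mbar_D consists of the elements
  killed by all chi_k with ord(zeta^k) not in D.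

  Conversely, a submodule M with torsion-free quotient is the image of a saturated ideal J of
  Z[X] containing X^f - 1.  A nonzero g in J of least degree divides a nonzero multiple of every
  element of J.  Since g divides a multiple of the squarefree X^f - 1, M is the common kernel of
  the chi_k with g(zeta^k) = 0.  This set of k is a union of order classes: an integer polynomial
  vanishing at a root of unity z also vanishes at z^p for every prime p not dividing the order of
  z (the Frobenius argument behind the irreducibility of cyclotomic polynomials), hence at z^a
  for every a coprime to the order.  So M = Mbar_D, where D is the set of orders of the zeta^k
  with g(zeta^k) <> 0.
*)

section \<open>Integer and complex polynomials\<close>

lemma pseudo_division:
  fixes p u :: "'a::idom poly"
  assumes "p \<noteq> 0"
  obtains q r where "smult (lead_coeff p ^ (Suc (degree u) - degree p)) u = p * q + r"
    and "r = 0 \<or> degree r < degree p"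
  using pseudo_divmod[OF assms] by (metis prod.exhaust)

lemma degree_X_pow_minus_one:
  assumes "n \<ge> 1"
  shows "degree (monom 1 n - 1 :: 'a::idom poly) = n"
proof -
  have "degree (- 1 :: 'a poly) < degree (monom 1 n :: 'a poly)"
    using assms by (simp add: degree_monom_eq)
  then show ?thesis
    using degree_add_eq_left[of "- 1" "monom 1 n :: 'a poly"] by (simp add: degree_monom_eq)
qed

lemma monic_X_pow_minus_one:
  assumes "n \<ge> 1"
  shows "monic (monom 1 n - 1 :: 'a::idom poly)"
  using assms by (simp add: degree_X_pow_minus_one)

lemma rsquarefree_X_pow_minus_one:
  assumes "n \<ge> 1"
  shows "rsquarefree (monom 1 n - 1 :: complex poly)"
  unfolding rsquarefree_roots
proof (intro allI notI)
  fix a :: complex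
  assume "poly (monom 1 n - 1) a = 0 \<and> poly (pderiv (monom 1 n - 1)) a = 0"
  then have "a ^ n = 1" "of_nat n * a ^ (n - 1) = 0"
    by (auto simp: poly_monom pderiv_diff pderiv_monom)
  then show False using assms by (cases "a = 0") (auto simp: power_0_left)
qed

lemma degree_of_int_poly [simp]: "degree (of_int_poly p :: 'a::{idom, ring_char_0} poly) = degree p"
  by (rule Polynomial.degree_map_poly) simp

lemma rsquarefree_dvd:
  assumes "rsquarefree q" and "p dvd q"
  shows "rsquarefree p"
proof -
  have "q \<noteq> 0" using assms(1) by (simp add: rsquarefree_def)
  then have "p \<noteq> 0" and "Polynomial.order a p \<le> Polynomial.order a q" for a
    using assms(2) dvd_imp_order_le by auto
  moreover have "Polynomial.order a q \<le> 1" for a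
    using assms(1) unfolding rsquarefree_def by (metis le_refl zero_le)
  ultimately show ?thesis
    unfolding rsquarefree_def by (metis le_trans le_eq_less_or_eq less_one)
qed

lemma prod_linear_factors_dvd:
  fixes p :: "'a::idom poly"
  assumes "finite Z" and "\<forall>z\<in>Z. poly p z = 0"
  shows "(\<Prod>z\<in>Z. [:- z, 1:]) dvd p"
  using assms
proof (induction Z arbitrary: p rule: finite_induct)
  case (insert z Z)
  then obtain p' where p: "p = [:- z, 1:] * p'" by (auto simp: poly_eq_0_iff_dvd elim!: dvdE)
  have "\<forall>w\<in>Z. poly p' w = 0" using insert by (auto simp: p)
  then have "(\<Prod>z\<in>Z. [:- z, 1:]) dvd p'" using insert.IH by blast
  then have "[:- z, 1:] * (\<Prod>z\<in>Z. [:- z, 1:]) dvd p"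
    unfolding p by (rule mult_dvd_mono[OF dvd_refl])
  then show ?case by (simp only: prod.insert[OF insert.hyps])
qed simp

lemma rsquarefree_dvd_of_roots:
  fixes p u :: "complex poly"
  assumes "rsquarefree p" and "\<And>z. poly p z = 0 \<Longrightarrow> poly u z = 0"
  shows "p dvd u"
proof -
  have "p \<noteq> 0" using assms(1) by (simp add: rsquarefree_def)
  have "(\<Prod>z | poly p z = 0. [:- z, 1:]) dvd u"
    using assms(2) poly_roots_finite[OF \<open>p \<noteq> 0\<close>] by (intro prod_linear_factors_dvd) auto
  then have "smult (lead_coeff p) (\<Prod>z | poly p z = 0. [:- z, 1:]) dvd u"
    using \<open>p \<noteq> 0\<close> by (intro smult_dvd) auto
  then show ?thesis using complex_poly_decompose_rsquarefree[OF assms(1)] by simp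
qed

lemma of_int_poly_dvd_imp_smult_dvd:
  fixes g u :: "int poly"
  assumes "g \<noteq> 0" and dvd: "of_int_poly g dvd (of_int_poly u :: 'a::{idom, ring_char_0} poly)"
  obtains c q where "c \<noteq> 0" and "smult c u = g * q"
proof -
  define c where "c = lead_coeff g ^ (Suc (degree u) - degree g)"
  obtain q r where qr: "smult c u = g * q + r" and r: "r = 0 \<or> degree r < degree g"
    unfolding c_def using pseudo_division[OF assms(1)] by blast
  have "(of_int_poly r :: 'a poly) = smult (of_int c) (of_int_poly u) - of_int_poly g * of_int_poly q"
    using arg_cong[OF qr, of "of_int_poly :: _ \<Rightarrow> 'a poly"] by (simp add: hom_distribs)
  also have "of_int_poly g dvd \<dots>"
    by (intro dvd_diff dvd_smult dvd dvd_triv_left)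
  finally have r_dvd: "of_int_poly g dvd (of_int_poly r :: 'a poly)" .
  have "r = 0"
  proof (rule ccontr)
    assume "r \<noteq> 0"
    then have "degree (of_int_poly g :: 'a poly) \<le> degree (of_int_poly r :: 'a poly)"
      using r_dvd by (intro dvd_imp_degree_le) auto
    then show False using r \<open>r \<noteq> 0\<close> by simp
  qed
  moreover have "c \<noteq> 0" using assms(1) by (simp add: c_def)
  ultimately show ?thesis using qr by (intro that) auto
qed

section \<open>Roots of unity and cyclotomic polynomials\<close>

definition zeta :: "nat \<Rightarrow> complex" where
  "zeta n = cis (2 * pi / n)"

lemma zeta_power: "zeta n ^ k = cis (2 * pi * k / n)"
  by (simp add: zeta_def Complex.DeMoivre field_simps)

lemma zeta_power_self [simp]: "zeta n ^ n = 1"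
  by (cases "n = 0") (simp_all add: zeta_power)

lemma zeta_power_mod: "zeta n ^ (k mod n) = zeta n ^ k"
  by (metis div_mult_mod_eq mult.commute mult_1 power_add power_mult power_one zeta_power_self)

lemma zeta_power_eq_iff:
  assumes "n \<ge> 1"
  shows "zeta n ^ a = zeta n ^ b \<longleftrightarrow> a mod n = b mod n"
proof -
  have "inj_on (\<lambda>k. cis (2 * pi * real k / real n)) {..<n}"
    using Complex.bij_betw_roots_unity[of n] assms by (auto simp: bij_betw_def)
  then have "zeta n ^ (a mod n) = zeta n ^ (b mod n) \<longleftrightarrow> a mod n = b mod n"
    using assms by (auto simp: zeta_power inj_on_def)
  then show ?thesis by (simp add: zeta_power_mod)
qed

lemma root_of_unity_eq_zeta_power:
  assumes "n \<ge> 1" and "z ^ n = 1"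
  obtains k where "k < n" and "z = zeta n ^ k"
  using Complex.bij_betw_roots_unity[of n] assms by (auto simp: bij_betw_def zeta_power)

(* the multiplicative order of zeta n ^ k *)
definition root_order :: "nat \<Rightarrow> nat \<Rightarrow> nat" where
  "root_order n k = n div gcd k n"

lemma root_order_dvd: "root_order n k dvd n"
  unfolding root_order_def by (metis dvd_div_mult_self dvd_triv_left gcd_dvd2)

lemma root_order_pos: "n \<ge> 1 \<Longrightarrow> root_order n k \<ge> 1"
  unfolding root_order_def
  by (metis div_greater_zero_iff gcd_le2_nat gcd_pos_nat less_one not_le gcd_nat.eq_neutr_iff)

(* Berlekamp_Zassenhaus hides Rings.coprime behind a coprime of its own; we use the standard
   notion, as in the definition of cyclo_complex. *)
definition prim_residues :: "nat \<Rightarrow> nat set" where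
  "prim_residues d = {j. j < d \<and> Rings.coprime j d}"

(* (d, j) corresponds to k = j * (n div d), and zeta n ^ k is then a primitive d-th root of
   unity; this bijection underlies the factorization of X^n - 1 into cyclotomic polynomials. *)
definition divisor_residue_pairs :: "nat \<Rightarrow> (nat \<times> nat) set" where
  "divisor_residue_pairs n = (SIGMA d:{d. d dvd n}. prim_residues d)"

lemma card_prim_residues: "card (prim_residues d) = totient d"
proof -
  have "prim_residues d = totatives d" if "d \<ge> 2"
    using that by (auto simp: prim_residues_def in_totatives_iff le_less intro!: Nat.gr0I)
  moreover have "d < 2 \<Longrightarrow> d = 0 \<or> d = 1" by auto
  ultimately show ?thesis
    by (cases "d \<ge> 2") (auto simp: totient_def prim_residues_def)
qed

lemma divisor_residue_pair_of_index:
  assumes "n \<ge> 1" and "k < n"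
  shows "(root_order n k, k div gcd k n) \<in> divisor_residue_pairs n"
    and "k div gcd k n * (n div root_order n k) = k"
proof -
  define g where "g = gcd k n"
  have "g > 0" using assms by (simp add: g_def)
  have kg: "k div g * g = k" and ng: "n div g * g = n" by (simp_all add: g_def)
  have ord: "root_order n k = n div g" by (simp add: root_order_def g_def)
  have "n div g > 0" using assms(1) ng by (auto intro!: Nat.gr0I)
  then have "n div root_order n k = g"
    unfolding ord by (subst (1) ng[symmetric]) simp
  then show "k div gcd k n * (n div root_order n k) = k" using kg by (simp add: g_def)
  have "k div g < n div g" using assms(2) kg ng by (metis mult_less_cancel2)
  moreover have "Rings.coprime (k div g) (n div g)"
    using div_gcd_coprime[of k n] assms by (simp add: g_def)
  ultimately show "(root_order n k, k div gcd k n) \<in> divisor_residue_pairs n"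
    unfolding ord using root_order_dvd[of n k]
    by (simp add: divisor_residue_pairs_def prim_residues_def ord flip: g_def)
qed

lemma index_of_divisor_residue_pair:
  assumes "(d, j) \<in> divisor_residue_pairs n" and "n \<ge> 1"
  shows "j * (n div d) < n"
    and "root_order n (j * (n div d)) = d"
    and "j * (n div d) div gcd (j * (n div d)) n = j"
proof -
  obtain m where n: "n = d * m" and "j < d" and "Rings.coprime j d"
    using assms(1) by (auto simp: divisor_residue_pairs_def prim_residues_def elim!: dvdE)
  have "d > 0" "m > 0" using \<open>j < d\<close> n assms(2) by (auto intro!: Nat.gr0I)
  have m: "n div d = m" using n \<open>d > 0\<close> by simp
  have gcd: "gcd (j * m) n = m"
    using gcd_mult_distrib_nat[of m j d] \<open>Rings.coprime j d\<close> by (simp add: n mult.commute)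
  show "j * (n div d) < n" using \<open>j < d\<close> \<open>m > 0\<close> by (simp add: m n)
  show "root_order n (j * (n div d)) = d"
    unfolding root_order_def m gcd using \<open>m > 0\<close> by (simp add: n)
  show "j * (n div d) div gcd (j * (n div d)) n = j"
    unfolding m gcd using \<open>m > 0\<close> by simp
qed

lemma bij_betw_divisor_residue_pairs:
  assumes "n \<ge> 1"
  shows "bij_betw (\<lambda>(d, j). j * (n div d)) (divisor_residue_pairs n) {..<n}"
proof (rule bij_betw_byWitness[where f' = "\<lambda>k. (root_order n k, k div gcd k n)"])
  show "\<forall>a\<in>divisor_residue_pairs n. (\<lambda>k. (root_order n k, k div gcd k n))
      ((\<lambda>(d, j). j * (n div d)) a) = a"
  proof
    fix a assume a: "a \<in> divisor_residue_pairs n"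
    obtain d j where [simp]: "a = (d, j)" by (cases a)
    show "(\<lambda>k. (root_order n k, k div gcd k n)) ((\<lambda>(d, j). j * (n div d)) a) = a"
      using index_of_divisor_residue_pair(2,3)[OF a[simplified] assms] by simp
  qed
  show "(\<lambda>(d, j). j * (n div d)) ` divisor_residue_pairs n \<subseteq> {..<n}"
  proof
    fix k assume "k \<in> (\<lambda>(d, j). j * (n div d)) ` divisor_residue_pairs n"
    then obtain a where a: "a \<in> divisor_residue_pairs n" and k: "k = (\<lambda>(d, j). j * (n div d)) a"
      by (rule imageE)
    obtain d j where [simp]: "a = (d, j)" by (cases a)
    show "k \<in> {..<n}" using index_of_divisor_residue_pair(1)[OF a[simplified] assms] k by simp
  qed
  show "\<forall>k\<in>{..<n}. (\<lambda>(d, j). j * (n div d)) (root_order n k, k div gcd k n) = k"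
    using divisor_residue_pair_of_index(2)[OF assms] by simp
  show "(\<lambda>k. (root_order n k, k div gcd k n)) ` {..<n} \<subseteq> divisor_residue_pairs n"
    using divisor_residue_pair_of_index(1)[OF assms] by blast
qed

lemma cyclo_complex_eq_prod_zeta:
  assumes "n \<ge> 1" and "d dvd n"
  shows "cyclo_complex d = (\<Prod>j\<in>prim_residues d. [:- (zeta n ^ (j * (n div d))), 1:])"
proof -
  obtain m where n: "n = d * m" using assms(2) by (elim dvdE)
  have "d > 0" "m > 0" using n assms(1) by (auto intro!: Nat.gr0I)
  then have "cis (2 * pi * real j / real d) = zeta n ^ (j * (n div d))" for j
    by (simp add: zeta_power n field_simps)
  then show ?thesis by (simp add: cyclo_complex_def prim_residues_def)
qed

lemma lead_coeff_cyclo_complex: "lead_coeff (cyclo_complex d) = 1"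
  unfolding cyclo_complex_def lead_coeff_prod by simp

lemma X_pow_minus_one_eq_prod_zeta:
  assumes "n \<ge> 1"
  shows "(monom 1 n - 1 :: complex poly) = (\<Prod>k<n. [:- (zeta n ^ k), 1:])"
proof -
  let ?p = "monom 1 n - 1 :: complex poly"
  have "?p = smult (lead_coeff ?p) (\<Prod>z | poly ?p z = 0. [:- z, 1:])"
    by (rule complex_poly_decompose_rsquarefree[OF rsquarefree_X_pow_minus_one[OF assms], symmetric])
  also have "lead_coeff ?p = 1" by (rule monic_X_pow_minus_one[OF assms])
  also have "{z. poly ?p z = 0} = {z. z ^ n = 1}" by (simp add: poly_monom)
  also have "(\<Prod>z | z ^ n = 1. [:- z, 1:]) = (\<Prod>k<n. [:- (zeta n ^ k), 1:])"
    using Complex.bij_betw_roots_unity[of n] assms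
    by (subst prod.reindex_bij_betw[symmetric]) (auto simp: zeta_power)
  finally show ?thesis by simp
qed

lemma X_pow_minus_one_eq_prod_cyclo_complex:
  assumes "n \<ge> 1"
  shows "(monom 1 n - 1 :: complex poly) = (\<Prod>d | d dvd n. cyclo_complex d)"
proof -
  have "(\<Prod>d | d dvd n. cyclo_complex d)
      = (\<Prod>d | d dvd n. \<Prod>j\<in>prim_residues d. [:- (zeta n ^ (j * (n div d))), 1:])"
    using cyclo_complex_eq_prod_zeta[OF assms] by simp
  also have "\<dots> = (\<Prod>(d, j)\<in>divisor_residue_pairs n. [:- (zeta n ^ (j * (n div d))), 1:])"
    unfolding divisor_residue_pairs_def
    by (rule prod.Sigma) (use assms in \<open>auto simp: prim_residues_def\<close>)
  also have "\<dots> = (\<Prod>x\<in>divisor_residue_pairs n.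
      (\<lambda>k. [:- (zeta n ^ k), 1:]) ((\<lambda>(d, j). j * (n div d)) x))"
    by (rule prod.cong) auto
  also have "\<dots> = (\<Prod>k<n. [:- (zeta n ^ k), 1:])"
    by (rule prod.reindex_bij_betw[OF bij_betw_divisor_residue_pairs[OF assms]])
  finally show ?thesis using X_pow_minus_one_eq_prod_zeta[OF assms] by simp
qed

lemma integral_quotient_by_monic:
  fixes C :: "'a::{idom, ring_char_0} poly"
  assumes "of_int_poly A = of_int_poly B * C" and "monic B"
  obtains Q where "C = of_int_poly Q"
proof -
  have "B \<noteq> 0" using assms(2) by auto
  then obtain q r where "A = B * q + r" and r: "r = 0 \<or> degree r < degree B"
    using pseudo_division[of B A] assms(2) by auto
  then have eq: "of_int_poly B * (C - of_int_poly q) = (of_int_poly r :: 'a poly)"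
    using assms(1) by (simp add: of_int_poly_hom.hom_add of_int_poly_hom.hom_mult algebra_simps)
  have "C = of_int_poly q"
  proof (rule ccontr)
    assume "C \<noteq> of_int_poly q"
    then have "degree (of_int_poly r :: 'a poly) \<ge> degree B" and "r \<noteq> 0"
      using \<open>B \<noteq> 0\<close> eq[symmetric] by (auto simp: degree_mult_eq)
    then show False using r by simp
  qed
  then show ?thesis by (rule that)
qed

lemma cyclo_complex_integral:
  assumes "d \<ge> 1"
  shows "\<exists>p. of_int_poly p = cyclo_complex d"
  using assms
proof (induction d rule: less_induct)
  case (less d)
  define E where "E = {e. e dvd d} - {d}"
  have "\<exists>p. of_int_poly p = cyclo_complex e" if "e \<in> E" for e
  proof -
    have "e dvd d" "e \<noteq> d" using that by (auto simp: E_def)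
    then have "e < d" "e \<ge> 1" using less.prems
      by (auto simp: dvd_imp_le le_neq_implies_less intro!: Nat.gr0I)
    then show ?thesis using less.IH by blast
  qed
  then obtain q where q: "\<And>e. e \<in> E \<Longrightarrow> of_int_poly (q e) = cyclo_complex e" by metis
  define B where "B = (\<Prod>e\<in>E. q e)"
  have B: "of_int_poly B = (\<Prod>e\<in>E. cyclo_complex e)"
    using q by (simp add: B_def of_int_poly_hom.hom_prod)
  then have "lead_coeff (of_int_poly B :: complex poly) = 1"
    by (simp add: lead_coeff_prod lead_coeff_cyclo_complex)
  then have "monic B" by simp
  have "of_int_poly (monom 1 d - 1) = (\<Prod>e | e dvd d. cyclo_complex e)"
    using X_pow_minus_one_eq_prod_cyclo_complex[OF less.prems] by (simp add: hom_distribs)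
  also have "\<dots> = cyclo_complex d * (\<Prod>e\<in>E. cyclo_complex e)"
    unfolding E_def using less.prems by (intro prod.remove) auto
  finally have "of_int_poly (monom 1 d - 1) = of_int_poly B * cyclo_complex d"
    by (simp add: B mult.commute)
  then obtain Q where "cyclo_complex d = of_int_poly Q"
    using \<open>monic B\<close> by (rule integral_quotient_by_monic)
  then show ?case by metis
qed

lemma of_int_poly_cyclo:
  assumes "d \<ge> 1"
  shows "of_int_poly (cyclo d) = cyclo_complex d"
proof -
  obtain p where p: "of_int_poly p = cyclo_complex d" using cyclo_complex_integral[OF assms] by blast
  have "q = p" if "of_int_poly q = cyclo_complex d" for q
  proof (rule poly_eqI)
    fix n
    have "complex_of_int (coeff q n) = complex_of_int (coeff p n)"
      using arg_cong[OF that[folded p], of "\<lambda>r. coeff r n"] by simp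
    then show "coeff q n = coeff p n" by simp
  qed
  then have "cyclo d = p"
    unfolding cyclo_def using p by blast
  then show ?thesis using p by simp
qed

lemma monic_cyclo:
  assumes "d \<ge> 1"
  shows "monic (cyclo d)"
proof -
  have "lead_coeff (of_int_poly (cyclo d) :: complex poly) = 1"
    using of_int_poly_cyclo[OF assms] lead_coeff_cyclo_complex by simp
  then show ?thesis by simp
qed

lemma degree_cyclo:
  assumes "d \<ge> 1"
  shows "degree (cyclo d) = totient d"
proof -
  have "degree (cyclo_complex d) = card (prim_residues d)"
    unfolding cyclo_complex_def prim_residues_def by (subst degree_prod_eq_sum_degree) auto
  then show ?thesis
    using of_int_poly_cyclo[OF assms] card_prim_residues[of d]
      degree_of_int_poly[of "cyclo d", where 'a = complex] by simp
qed

lemma X_pow_minus_one_eq_prod_cyclo: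
  assumes "n \<ge> 1"
  shows "(monom 1 n - 1 :: int poly) = (\<Prod>d | d dvd n. cyclo d)"
proof -
  have "of_int_poly (\<Prod>d | d dvd n. cyclo d) = (\<Prod>d | d dvd n. cyclo_complex d)"
    using assms by (auto simp: of_int_poly_hom.hom_prod of_int_poly_cyclo intro!: prod.cong Nat.gr0I)
  also have "\<dots> = of_int_poly (monom 1 n - 1)"
    using X_pow_minus_one_eq_prod_cyclo_complex[OF assms] by (simp add: hom_distribs)
  finally show ?thesis by simp
qed

lemma Pfd_eq_prod:
  assumes "f \<ge> 1" and "d dvd f"
  shows "Pfd f d = (\<Prod>e\<in>{e. e dvd f} - {d}. cyclo e)"
proof -
  have "d \<ge> 1" using assms by (auto intro!: Nat.gr0I)
  have "(monom 1 f - 1 :: int poly) = cyclo d * (\<Prod>e\<in>{e. e dvd f} - {d}. cyclo e)"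
    unfolding X_pow_minus_one_eq_prod_cyclo[OF assms(1)] using assms by (intro prod.remove) auto
  then show ?thesis
    unfolding Pfd_def using monic_cyclo[OF \<open>d \<ge> 1\<close>] by (metis nonzero_mult_div_cancel_left
        leading_coeff_0_iff zero_neq_one)
qed

lemma cyclo_mult_Pfd:
  assumes "f \<ge> 1" and "d dvd f"
  shows "cyclo d * Pfd f d = monom 1 f - 1"
  unfolding Pfd_eq_prod[OF assms] X_pow_minus_one_eq_prod_cyclo[OF assms(1)]
  using assms by (intro prod.remove[symmetric]) auto

lemma poly_cyclo_complex_zeta_power_eq_0_iff:
  assumes "f \<ge> 1" and "e dvd f" and "k < f"
  shows "poly (cyclo_complex e) (zeta f ^ k) = 0 \<longleftrightarrow> e = root_order f k"
proof -
  have "poly (cyclo_complex e) (zeta f ^ k) = 0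
      \<longleftrightarrow> (\<exists>j\<in>prim_residues e. zeta f ^ k = zeta f ^ (j * (f div e)))"
    unfolding cyclo_complex_eq_prod_zeta[OF assms(1,2)] poly_prod
    by (simp add: prod_zero_iff prim_residues_def)
  also have "\<dots> \<longleftrightarrow> (\<exists>j\<in>prim_residues e. k = j * (f div e))"
  proof -
    have "j * (f div e) < f" if "j \<in> prim_residues e" for j
      using index_of_divisor_residue_pair(1)[OF _ assms(1)] that assms(2)
      by (simp add: divisor_residue_pairs_def)
    then show ?thesis using assms by (auto simp: zeta_power_eq_iff)
  qed
  also have "\<dots> \<longleftrightarrow> e = root_order f k"
  proof
    assume "\<exists>j\<in>prim_residues e. k = j * (f div e)"
    then show "e = root_order f k"
      using index_of_divisor_residue_pair(2)[OF _ assms(1)] assms(2)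
      by (auto simp: divisor_residue_pairs_def)
  next
    assume "e = root_order f k"
    then have "k div gcd k f \<in> prim_residues e" and "k = k div gcd k f * (f div e)"
      using divisor_residue_pair_of_index[OF assms(1,3)] by (auto simp: divisor_residue_pairs_def)
    then show "\<exists>j\<in>prim_residues e. k = j * (f div e)" by blast
  qed
  finally show ?thesis .
qed

lemma poly_Pfd_zeta_power_eq_0_iff:
  assumes "f \<ge> 1" and "d dvd f" and "k < f"
  shows "poly (of_int_poly (Pfd f d)) (zeta f ^ k) = 0 \<longleftrightarrow> root_order f k \<noteq> d"
proof -
  have "of_int_poly (Pfd f d) = (\<Prod>e\<in>{e. e dvd f} - {d}. cyclo_complex e)"
    unfolding Pfd_eq_prod[OF assms(1,2)] of_int_poly_hom.hom_prod
    using assms(1) by (auto intro!: prod.cong of_int_poly_cyclo Nat.gr0I)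
  then have "poly (of_int_poly (Pfd f d)) (zeta f ^ k) = 0
      \<longleftrightarrow> (\<exists>e\<in>{e. e dvd f} - {d}. poly (cyclo_complex e) (zeta f ^ k) = 0)"
    using assms(1) by (simp add: poly_prod prod_zero_iff)
  also have "\<dots> \<longleftrightarrow> root_order f k \<noteq> d"
    using poly_cyclo_complex_zeta_power_eq_0_iff[OF assms(1) _ assms(3)] root_order_dvd[of f k]
    by auto
  finally show ?thesis .
qed

section \<open>The group ring as a quotient of Z[X]\<close>

lemma sum_fun_apply: "(\<Sum>d\<in>D. (x d :: 'a \<Rightarrow> 'b::comm_monoid_add)) i = (\<Sum>d\<in>D. x d i)"
  by (induction D rule: infinite_finite_induct) auto

lemma poly_sigma_shift_bounded:
  assumes "degree p < N"
  shows "poly_sigma_shift f p l =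
    (\<lambda>k. if k < f then (\<Sum>i<N. if (i + l) mod f = k then coeff p i else 0) else 0)"
proof (rule ext)
  fix k
  have "(\<Sum>i\<le>degree p. if (i + l) mod f = k then coeff p i else 0)
      = (\<Sum>i<N. if (i + l) mod f = k then coeff p i else 0)"
    by (rule sum.mono_neutral_left) (use assms in \<open>auto simp: coeff_eq_0\<close>)
  then show "poly_sigma_shift f p l k =
      (if k < f then (\<Sum>i<N. if (i + l) mod f = k then coeff p i else 0) else 0)"
    by (simp add: poly_sigma_shift_def)
qed

lemma poly_sigma_shift_add:
  "poly_sigma_shift f (p + q) l = poly_sigma_shift f p l + poly_sigma_shift f q l"
proof -
  define N where "N = Suc (degree p + degree q)"
  have "degree (p + q) < N" "degree p < N" "degree q < N"
    using degree_add_le_max[of p q] by (auto simp: N_def)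
  then show ?thesis
    by (auto simp: poly_sigma_shift_bounded[of _ N] sum.distrib[symmetric] intro!: sum.cong ext)
qed

lemma poly_sigma_shift_0 [simp]: "poly_sigma_shift f 0 l = 0"
  by (simp add: poly_sigma_shift_def zero_fun_def cong: if_cong)

lemma poly_sigma_shift_smult:
  "poly_sigma_shift f (smult c p) l = (\<lambda>k. c * poly_sigma_shift f p l k)"
proof (cases "c = 0")
  case True
  then show ?thesis by (simp add: fun_eq_iff)
next
  case False
  then show ?thesis by (auto simp: poly_sigma_shift_def sum_distrib_left intro!: ext sum.cong)
qed

lemma poly_sigma_shift_diff:
  "poly_sigma_shift f (p - q) l = poly_sigma_shift f p l - poly_sigma_shift f q l"
  using poly_sigma_shift_add[of f p "smult (- 1) q" l] poly_sigma_shift_smult[of f "- 1" q l]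
  by (simp add: fun_eq_iff)

lemma poly_sigma_shift_sum:
  "poly_sigma_shift f (\<Sum>i\<in>A. p i) l = (\<Sum>i\<in>A. poly_sigma_shift f (p i) l)"
  by (induction A rule: infinite_finite_induct) (auto simp: poly_sigma_shift_add)

lemma poly_sigma_shift_monom_mult:
  "poly_sigma_shift f (monom 1 m * p) l = poly_sigma_shift f p (l + m)"
proof (induction m arbitrary: l)
  case 0
  then show ?case by (simp add: monom_0)
next
  case (Suc m)
  have "degree (pCons 0 q) < Suc (Suc (degree q))" for q :: "int poly"
    by (cases "q = 0") auto
  then have "poly_sigma_shift f (pCons 0 q) l = poly_sigma_shift f q (Suc l)" for q l
    unfolding poly_sigma_shift_bounded[OF lessI]
      poly_sigma_shift_bounded[of "pCons 0 q" "Suc (Suc (degree q))"]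
    by (auto simp: sum.lessThan_Suc_shift coeff_pCons simp del: sum.lessThan_Suc
        intro!: ext sum.cong)
  then show ?case using Suc by (simp add: monom_Suc)
qed

lemma poly_sigma_shift_mod: "poly_sigma_shift f p (l mod f) = poly_sigma_shift f p l"
proof -
  have "(i + l mod f) mod f = (i + l) mod f" for i by (simp add: mod_add_right_eq)
  then show ?thesis by (simp add: poly_sigma_shift_def cong: if_cong)
qed

lemma poly_sigma_shift_X_pow_minus_one_mult:
  "poly_sigma_shift f ((monom 1 f - 1) * p) l = 0"
  using poly_sigma_shift_mod[of f p "l + f"] poly_sigma_shift_mod[of f p l]
  by (simp add: ring_distribs poly_sigma_shift_diff poly_sigma_shift_monom_mult)

lemma poly_sigma_shift_in_grp_ring: "poly_sigma_shift f p l \<in> grp_ring f"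
  by (simp add: poly_sigma_shift_def grp_ring_def)

lemma poly_eq_sum_monom_bounded:
  assumes "degree q < N"
  shows "q = (\<Sum>i<N. monom (coeff q i) i)"
  by (rule poly_eqI) (use assms in \<open>auto simp: coeff_sum coeff_monom coeff_eq_0\<close>)

lemma poly_sigma_shift_mult:
  assumes "degree q < N"
  shows "poly_sigma_shift f (q * p) l = (\<Sum>i<N. (\<lambda>k. coeff q i * poly_sigma_shift f p (l + i) k))"
proof -
  have "q * p = (\<Sum>i<N. smult (coeff q i) (monom 1 i * p))"
    by (subst poly_eq_sum_monom_bounded[OF assms])
      (simp add: sum_distrib_right smult_monom flip: mult_smult_left)
  then show ?thesis
    by (simp add: poly_sigma_shift_sum poly_sigma_shift_smult poly_sigma_shift_monom_mult)
qed

definition sigma_pow :: "nat \<Rightarrow> nat \<Rightarrow> int" where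
  "sigma_pow i = (\<lambda>j. if j = i then 1 else 0)"

lemma gmult_sigma_pow:
  assumes "i < f"
  shows "gmult f (sigma_pow i) x =
    (\<lambda>k. if k < f then (\<Sum>j<f. if (i + j) mod f = k then x j else 0) else 0)"
proof (rule ext)
  fix k
  have "(\<Sum>a<f. \<Sum>b<f. if (a + b) mod f = k then sigma_pow i a * x b else 0)
      = (\<Sum>a<f. if a = i then (\<Sum>b<f. if (i + b) mod f = k then x b else 0) else 0)"
    by (rule sum.cong) (auto simp: sigma_pow_def cong: if_cong)
  also have "\<dots> = (\<Sum>b<f. if (i + b) mod f = k then x b else 0)"
    using assms by simp
  finally show "gmult f (sigma_pow i) x k =
      (if k < f then (\<Sum>j<f. if (i + j) mod f = k then x j else 0) else 0)"
    by (simp add: gmult_def)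
qed

lemma gmult_sigma_pow_poly_sigma_shift:
  assumes "i < f"
  shows "gmult f (sigma_pow i) (poly_sigma_shift f p l) = poly_sigma_shift f p (l + i)"
proof (rule ext)
  fix k
  show "gmult f (sigma_pow i) (poly_sigma_shift f p l) k = poly_sigma_shift f p (l + i) k"
  proof (cases "k < f")
    case False
    then show ?thesis using assms by (simp add: gmult_sigma_pow poly_sigma_shift_def)
  next
    case True
    have "(\<Sum>j<f. if (i + j) mod f = k then poly_sigma_shift f p l j else 0)
        = (\<Sum>j<f. \<Sum>t\<le>degree p. if (i + j) mod f = k \<and> (t + l) mod f = j then coeff p t else 0)"
      by (rule sum.cong) (auto simp: poly_sigma_shift_def)
    also have "\<dots> = (\<Sum>t\<le>degree p. \<Sum>j<f.
        if j = (t + l) mod f then (if (i + j) mod f = k then coeff p t else 0) else 0)"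
      by (subst sum.swap) (auto intro!: sum.cong)
    also have "\<dots> = (\<Sum>t\<le>degree p. if (t + (l + i)) mod f = k then coeff p t else 0)"
      using assms by (intro sum.cong) (auto simp: mod_add_right_eq add_ac)
    also have "\<dots> = poly_sigma_shift f p (l + i) k"
      using True by (simp add: poly_sigma_shift_def)
    finally have "(\<Sum>j<f. if (i + j) mod f = k then poly_sigma_shift f p l j else 0)
        = poly_sigma_shift f p (l + i) k" .
    then show ?thesis using True assms by (simp add: gmult_sigma_pow)
  qed
qed

lemma gmult_eq_sum_sigma_pow:
  "gmult f r x = (\<Sum>i<f. (\<lambda>k. r i * gmult f (sigma_pow i) x k))"
proof (rule ext)
  fix k
  show "gmult f r x k = (\<Sum>i<f. (\<lambda>k. r i * gmult f (sigma_pow i) x k)) k"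
  proof (cases "k < f")
    case True
    have "(\<Sum>i<f. (\<lambda>k. r i * gmult f (sigma_pow i) x k)) k
        = (\<Sum>i<f. r i * (\<Sum>j<f. if (i + j) mod f = k then x j else 0))"
      unfolding sum_fun_apply using True by (intro sum.cong) (auto simp: gmult_sigma_pow)
    also have "\<dots> = (\<Sum>i<f. \<Sum>j<f. if (i + j) mod f = k then r i * x j else 0)"
      by (auto simp: sum_distrib_left intro!: sum.cong)
    finally show ?thesis using True by (simp add: gmult_def)
  next
    case False
    then show ?thesis by (simp add: gmult_def sum_fun_apply)
  qed
qed

lemma gmult_sum_right: "gmult f r (\<Sum>d\<in>D. x d) = (\<Sum>d\<in>D. gmult f r (x d))"
proof (rule ext)
  fix k
  show "gmult f r (\<Sum>d\<in>D. x d) k = (\<Sum>d\<in>D. gmult f r (x d)) k"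
  proof (cases "k < f")
    case True
    have "gmult f r (\<Sum>d\<in>D. x d) k
        = (\<Sum>a<f. \<Sum>b<f. \<Sum>d\<in>D. if (a + b) mod f = k then r a * x d b else 0)"
      using True by (auto simp: gmult_def sum_fun_apply sum_distrib_left intro!: sum.cong)
    also have "\<dots> = (\<Sum>d\<in>D. \<Sum>a<f. \<Sum>b<f. if (a + b) mod f = k then r a * x d b else 0)"
      by (subst sum.swap) (simp add: sum.swap[of _ D])
    finally show ?thesis using True by (simp add: gmult_def sum_fun_apply)
  qed (simp add: gmult_def sum_fun_apply)
qed

lemma gmult_scale_right: "gmult f r (\<lambda>k. c * x k) = (\<lambda>k. c * gmult f r x k)"
  by (auto simp: gmult_def sum_distrib_left mult_ac intro!: ext sum.cong)

lemma gmult_in_grp_ring: "gmult f r x \<in> grp_ring f"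
  by (simp add: gmult_def grp_ring_def)

definition lift_poly :: "nat \<Rightarrow> (nat \<Rightarrow> int) \<Rightarrow> int poly" where
  "lift_poly f x = (\<Sum>i<f. monom (x i) i)"

lemma coeff_lift_poly: "coeff (lift_poly f x) t = (if t < f then x t else 0)"
  by (simp add: lift_poly_def coeff_sum coeff_monom)

lemma degree_lift_poly_less: "f \<ge> 1 \<Longrightarrow> degree (lift_poly f x) < f"
  by (rule le_less_trans[of _ "f - 1"], rule degree_le) (auto simp: coeff_lift_poly)

lemma poly_sigma_shift_lift_poly:
  assumes "x \<in> grp_ring f"
  shows "poly_sigma_shift f (lift_poly f x) 0 = x"
proof (rule ext)
  fix k
  have N: "degree (lift_poly f x) < Suc (f + degree (lift_poly f x))" by simp
  show "poly_sigma_shift f (lift_poly f x) 0 k = x k"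
  proof (cases "k < f")
    case True
    have "(\<Sum>i<Suc (f + degree (lift_poly f x)). if i mod f = k then coeff (lift_poly f x) i else 0)
       = (\<Sum>i<Suc (f + degree (lift_poly f x)). if i = k then x k else 0)"
      using True by (intro sum.cong) (auto simp: coeff_lift_poly)
    then show ?thesis using True by (simp add: poly_sigma_shift_bounded[OF N])
  next
    case False
    then show ?thesis using assms by (simp add: poly_sigma_shift_def grp_ring_def)
  qed
qed

lemma gmult_poly_sigma_shift:
  assumes "f \<ge> 1"
  shows "gmult f r (poly_sigma_shift f q 0) = poly_sigma_shift f (lift_poly f r * q) 0"
  unfolding gmult_eq_sum_sigma_pow[of f r]
    poly_sigma_shift_mult[OF degree_lift_poly_less[OF assms]]
  by (intro sum.cong refl) (simp add: gmult_sigma_pow_poly_sigma_shift coeff_lift_poly)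

definition character :: "nat \<Rightarrow> nat \<Rightarrow> (nat \<Rightarrow> int) \<Rightarrow> complex" where
  "character f k x = (\<Sum>i<f. of_int (x i) * zeta f ^ (i * k))"

lemma character_scale: "character f k (\<lambda>i. c * x i) = of_int c * character f k x"
  by (simp add: character_def sum_distrib_left algebra_simps)

lemma character_sum: "character f k (\<Sum>d\<in>D. x d) = (\<Sum>d\<in>D. character f k (x d))"
  by (simp add: character_def sum_fun_apply sum_distrib_right of_int_sum) (rule sum.swap)

lemma character_poly_sigma_shift:
  assumes "f \<ge> 1"
  shows "character f k (poly_sigma_shift f p 0) = poly (of_int_poly p) (zeta f ^ k)"
proof -
  have "character f k (poly_sigma_shift f p 0)
      = (\<Sum>j<f. \<Sum>t\<le>degree p. if j = t mod f then of_int (coeff p t) * zeta f ^ (j * k) else 0)"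
    unfolding character_def poly_sigma_shift_def
    by (auto simp: of_int_sum sum_distrib_right intro!: sum.cong)
  also have "\<dots> = (\<Sum>t\<le>degree p. \<Sum>j<f. if j = t mod f then of_int (coeff p t) * zeta f ^ (j * k) else 0)"
    by (rule sum.swap)
  also have "\<dots> = (\<Sum>t\<le>degree p. of_int (coeff p t) * (zeta f ^ k) ^ t)"
  proof (rule sum.cong)
    fix t
    have "zeta f ^ (t mod f * k) = (zeta f ^ (t mod f)) ^ k" by (rule power_mult)
    also have "\<dots> = (zeta f ^ k) ^ t"
      by (simp only: zeta_power_mod flip: power_mult) (simp only: mult.commute)
    finally have "zeta f ^ (t mod f * k) = (zeta f ^ k) ^ t" .
    then show "(\<Sum>j<f. if j = t mod f then of_int (coeff p t) * zeta f ^ (j * k) else 0)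
        = of_int (coeff p t) * (zeta f ^ k) ^ t"
      using assms by auto
  qed simp
  also have "\<dots> = poly (of_int_poly p) (zeta f ^ k)"
    by (simp add: poly_altdef mult.commute)
  finally show ?thesis .
qed

section \<open>The modules M_d and their saturations\<close>

lemma Md_eq_range:
  assumes "f \<ge> 1" and "d dvd f"
  shows "Md f d = range (\<lambda>u. poly_sigma_shift f (u * Pfd f d) 0)"
proof -
  have "d \<ge> 1" using assms by (auto intro!: Nat.gr0I)
  have "x \<in> range (\<lambda>u. poly_sigma_shift f (u * Pfd f d) 0)" if xM: "x \<in> Md f d" for x
  proof -
    have "totient d \<ge> 1" using \<open>d \<ge> 1\<close> by (simp add: Suc_le_eq)
    obtain c where x: "x = (\<Sum>l<totient d. (\<lambda>k. c l * poly_sigma_shift f (Pfd f d) l k))"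
      using xM by (auto simp: Md_def)
    have "poly_sigma_shift f (lift_poly (totient d) c * Pfd f d) 0 = x"
      unfolding x poly_sigma_shift_mult[OF degree_lift_poly_less[OF \<open>totient d \<ge> 1\<close>]]
      by (intro sum.cong refl) (simp add: coeff_lift_poly)
    then show ?thesis by blast
  qed
  moreover have "x \<in> Md f d" if xR: "x \<in> range (\<lambda>u. poly_sigma_shift f (u * Pfd f d) 0)" for x
  proof -
    obtain u where x: "x = poly_sigma_shift f (u * Pfd f d) 0" using xR by blast
    have "cyclo d \<noteq> 0" using monic_cyclo[OF \<open>d \<ge> 1\<close>] by auto
    then obtain q r
      where "smult (lead_coeff (cyclo d) ^ (Suc (degree u) - degree (cyclo d))) u = cyclo d * q + r"
        and "r = 0 \<or> degree r < degree (cyclo d)"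
      by (rule pseudo_division)
    then have u: "u = cyclo d * q + r" and "r = 0 \<or> degree r < degree (cyclo d)"
      using monic_cyclo[OF \<open>d \<ge> 1\<close>] by simp_all
    then have r: "degree r < totient d" using \<open>d \<ge> 1\<close> by (auto simp: degree_cyclo)
    have "u * Pfd f d = (monom 1 f - 1) * q + r * Pfd f d"
      by (simp add: u algebra_simps flip: cyclo_mult_Pfd[OF assms])
    then have "x = poly_sigma_shift f (r * Pfd f d) 0"
      by (simp add: x poly_sigma_shift_add poly_sigma_shift_X_pow_minus_one_mult)
    also have "\<dots> = (\<Sum>l<totient d. (\<lambda>k. coeff r l * poly_sigma_shift f (Pfd f d) l k))"
      by (simp add: poly_sigma_shift_mult[OF r])
    finally show ?thesis by (auto simp: Md_def)
  qed
  ultimately show ?thesis by blast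
qed

context
  fixes f d :: nat
  assumes f: "f \<ge> 1" and d: "d dvd f"
begin

lemma Md_zero: "0 \<in> Md f d"
  unfolding Md_eq_range[OF f d] by (rule range_eqI[of _ _ 0]) simp

lemma Md_add:
  assumes "x \<in> Md f d" and "y \<in> Md f d"
  shows "x + y \<in> Md f d"
proof -
  obtain u v where "x = poly_sigma_shift f (u * Pfd f d) 0" "y = poly_sigma_shift f (v * Pfd f d) 0"
    using assms unfolding Md_eq_range[OF f d] by auto
  then have "x + y = poly_sigma_shift f ((u + v) * Pfd f d) 0"
    by (simp add: distrib_right poly_sigma_shift_add)
  then show ?thesis unfolding Md_eq_range[OF f d] by blast
qed

lemma Md_scale:
  assumes "x \<in> Md f d"
  shows "(\<lambda>k. c * x k) \<in> Md f d"
proof -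
  obtain u where "x = poly_sigma_shift f (u * Pfd f d) 0"
    using assms unfolding Md_eq_range[OF f d] by auto
  then have "(\<lambda>k. c * x k) = poly_sigma_shift f (smult c u * Pfd f d) 0"
    by (simp add: poly_sigma_shift_smult)
  then show ?thesis unfolding Md_eq_range[OF f d] by blast
qed

lemma Md_gmult:
  assumes "x \<in> Md f d"
  shows "gmult f r x \<in> Md f d"
proof -
  obtain u where "x = poly_sigma_shift f (u * Pfd f d) 0"
    using assms unfolding Md_eq_range[OF f d] by auto
  then have "gmult f r x = poly_sigma_shift f ((lift_poly f r * u) * Pfd f d) 0"
    by (simp add: gmult_poly_sigma_shift[OF f] mult.assoc)
  then show ?thesis unfolding Md_eq_range[OF f d] by blast
qed

lemma poly_sigma_shift_Pfd_in_Md: "poly_sigma_shift f (Pfd f d) 0 \<in> Md f d"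
  unfolding Md_eq_range[OF f d] by (rule range_eqI[of _ _ 1]) simp

lemma character_Md:
  assumes "x \<in> Md f d" and "k < f" and "root_order f k \<noteq> d"
  shows "character f k x = 0"
  using assms poly_Pfd_zeta_power_eq_0_iff[OF f d]
  by (auto simp: Md_eq_range[OF f d] character_poly_sigma_shift[OF f] hom_distribs)

end

lemma MD_iff: "x \<in> MD f D \<longleftrightarrow> (\<exists>y. x = (\<Sum>d\<in>D. y d) \<and> (\<forall>d\<in>D. y d \<in> Md f d))"
  by (auto simp: MD_def)

context
  fixes f :: nat and D :: "nat set"
  assumes f: "f \<ge> 1" and D: "D \<subseteq> {d. 0 < d \<and> d dvd f}"
begin

lemma MD_zero: "0 \<in> MD f D"
  unfolding MD_iff using Md_zero[OF f] D by (intro exI[of _ "\<lambda>_. 0"]) auto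

lemma MD_add:
  assumes "x \<in> MD f D" and "y \<in> MD f D"
  shows "x + y \<in> MD f D"
proof -
  obtain x' y' where x: "x = (\<Sum>d\<in>D. x' d)" "\<forall>d\<in>D. x' d \<in> Md f d"
    and y: "y = (\<Sum>d\<in>D. y' d)" "\<forall>d\<in>D. y' d \<in> Md f d"
    using assms unfolding MD_iff by blast
  have "x + y = (\<Sum>d\<in>D. x' d + y' d)" by (simp add: x y sum.distrib)
  moreover have "\<forall>d\<in>D. x' d + y' d \<in> Md f d" using x y D Md_add[OF f] by auto
  ultimately show ?thesis unfolding MD_iff by blast
qed

lemma MD_scale:
  assumes "x \<in> MD f D"
  shows "(\<lambda>k. c * x k) \<in> MD f D"
proof -
  obtain x' where x: "x = (\<Sum>d\<in>D. x' d)" "\<forall>d\<in>D. x' d \<in> Md f d"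
    using assms unfolding MD_iff by blast
  have "(\<lambda>k. c * x k) = (\<Sum>d\<in>D. (\<lambda>k. c * x' d k))"
    by (simp add: x sum_fun_apply sum_distrib_left fun_eq_iff)
  moreover have "\<forall>d\<in>D. (\<lambda>k. c * x' d k) \<in> Md f d" using x D Md_scale[OF f] by auto
  ultimately show ?thesis unfolding MD_iff by blast
qed

lemma MD_gmult:
  assumes "x \<in> MD f D"
  shows "gmult f r x \<in> MD f D"
proof -
  obtain x' where x: "x = (\<Sum>d\<in>D. x' d)" "\<forall>d\<in>D. x' d \<in> Md f d"
    using assms unfolding MD_iff by blast
  have "gmult f r x = (\<Sum>d\<in>D. gmult f r (x' d))" by (simp add: x gmult_sum_right)
  moreover have "\<forall>d\<in>D. gmult f r (x' d) \<in> Md f d" using x D Md_gmult[OF f] by auto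
  ultimately show ?thesis unfolding MD_iff by blast
qed

lemma Md_subset_MD:
  assumes "d \<in> D"
  shows "Md f d \<subseteq> MD f D"
proof
  fix x
  assume x: "x \<in> Md f d"
  have "finite D" using D f by (auto intro: finite_subset[OF _ finite_divisors_nat])
  then have "x = (\<Sum>e\<in>D. if e = d then x else 0)" using assms by simp
  moreover have "\<forall>e\<in>D. (if e = d then x else 0) \<in> Md f e" using x D Md_zero[OF f] by auto
  ultimately show "x \<in> MD f D" unfolding MD_iff by blast
qed

lemma character_MD:
  assumes "x \<in> MD f D" and "k < f" and "root_order f k \<notin> D"
  shows "character f k x = 0"
proof -
  obtain x' where x: "x = (\<Sum>d\<in>D. x' d)" "\<forall>d\<in>D. x' d \<in> Md f d"
    using assms unfolding MD_iff by blast
  have "character f k (x' d) = 0" if "d \<in> D" for d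
    using character_Md[OF f _ _ assms(2)] that x D assms(3) by auto
  then show ?thesis by (simp add: x character_sum)
qed

end

section \<open>Submodules with torsion-free quotient\<close>

locale saturated_submodule =
  fixes f :: nat and M :: "(nat \<Rightarrow> int) set"
  assumes f_ge_1: "f \<ge> 1"
    and submodule: "is_submodule f M"
    and torsion_free: "quotient_torsion_free f M"

lemma is_submodule_MDbar:
  assumes f: "f \<ge> 1" and D: "D \<subseteq> {d. 0 < d \<and> d dvd f}"
  shows "is_submodule f (MDbar f D)"
proof -
  have "0 \<in> MDbar f D"
    using MD_zero[OF f D] by (auto simp: MDbar_def grp_ring_def zero_fun_def intro!: exI[of _ 1])
  moreover have "x + y \<in> MDbar f D" if x: "x \<in> MDbar f D" and y: "y \<in> MDbar f D" for x y
  proof -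
    obtain a where a: "a \<noteq> 0" "(\<lambda>k. a * x k) \<in> MD f D" using x by (auto simp: MDbar_def)
    obtain b where b: "b \<noteq> 0" "(\<lambda>k. b * y k) \<in> MD f D" using y by (auto simp: MDbar_def)
    have "(\<lambda>k. b * (a * x k)) + (\<lambda>k. a * (b * y k)) \<in> MD f D"
      using MD_scale[OF f D a(2), of b] MD_scale[OF f D b(2), of a] by (rule MD_add[OF f D])
    then have "(\<lambda>k. (a * b) * (x + y) k) \<in> MD f D"
      by (simp add: algebra_simps plus_fun_def)
    moreover have "x + y \<in> grp_ring f" using x y by (auto simp: MDbar_def grp_ring_def)
    ultimately show ?thesis
      using a b by (auto simp: MDbar_def intro!: exI[of _ "a * b"])
  qed
  moreover have "gmult f r x \<in> MDbar f D" if x: "x \<in> MDbar f D" for r x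
  proof -
    obtain a where "a \<noteq> 0" "(\<lambda>k. a * x k) \<in> MD f D" using x by (auto simp: MDbar_def)
    then have "(\<lambda>k. a * gmult f r x k) \<in> MD f D"
      using MD_gmult[OF f D] by (simp flip: gmult_scale_right)
    then show ?thesis using \<open>a \<noteq> 0\<close> gmult_in_grp_ring by (auto simp: MDbar_def)
  qed
  ultimately show ?thesis unfolding is_submodule_def by (auto simp: MDbar_def)
qed

lemma quotient_torsion_free_MDbar: "quotient_torsion_free f (MDbar f D)"
  unfolding quotient_torsion_free_def
proof (intro ballI allI impI)
  fix x a
  assume "x \<in> grp_ring f" "a \<noteq> 0" "(\<lambda>k. a * x k) \<in> MDbar f D"
  then obtain b where "b \<noteq> 0" "(\<lambda>k. (b * a) * x k) \<in> MD f D"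
    by (auto simp: MDbar_def mult.assoc)
  then show "x \<in> MDbar f D"
    using \<open>x \<in> grp_ring f\<close> \<open>a \<noteq> 0\<close> by (auto simp: MDbar_def intro!: exI[of _ "b * a"])
qed

lemma saturated_submodule_MDbar:
  assumes "f \<ge> 1" and "D \<subseteq> {d. 0 < d \<and> d dvd f}"
  shows "saturated_submodule f (MDbar f D)"
  using assms is_submodule_MDbar quotient_torsion_free_MDbar by unfold_locales

definition char_zeros :: "nat \<Rightarrow> (nat \<Rightarrow> int) set \<Rightarrow> nat set" where
  "char_zeros f M = {k. k < f \<and> (\<forall>x\<in>M. character f k x = 0)}"

lemma char_zeros_MDbar:
  assumes f: "f \<ge> 1" and D: "D \<subseteq> {d. 0 < d \<and> d dvd f}"
  shows "char_zeros f (MDbar f D) = {k. k < f \<and> root_order f k \<notin> D}"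
proof (intro equalityI subsetI)
  fix k
  assume "k \<in> char_zeros f (MDbar f D)"
  then have k: "k < f" and zero: "\<forall>x\<in>MDbar f D. character f k x = 0"
    by (auto simp: char_zeros_def)
  have "root_order f k \<notin> D"
  proof
    assume "root_order f k \<in> D"
    define d where "d = root_order f k"
    have "d dvd f" by (simp add: d_def root_order_dvd)
    have "poly_sigma_shift f (Pfd f d) 0 \<in> MD f D"
      using Md_subset_MD[OF f D] poly_sigma_shift_Pfd_in_Md[OF f \<open>d dvd f\<close>] \<open>root_order f k \<in> D\<close>
      by (auto simp: d_def)
    then have "poly_sigma_shift f (Pfd f d) 0 \<in> MDbar f D"
      by (auto simp: MDbar_def poly_sigma_shift_in_grp_ring intro!: exI[of _ 1])
    then have "character f k (poly_sigma_shift f (Pfd f d) 0) = 0" using zero by blast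
    then have "poly (of_int_poly (Pfd f d)) (zeta f ^ k) = 0"
      by (simp add: character_poly_sigma_shift[OF f])
    then show False using poly_Pfd_zeta_power_eq_0_iff[OF f \<open>d dvd f\<close> k] by (simp add: d_def)
  qed
  then show "k \<in> {k. k < f \<and> root_order f k \<notin> D}" using k by simp
next
  fix k
  assume "k \<in> {k. k < f \<and> root_order f k \<notin> D}"
  then have k: "k < f" and "root_order f k \<notin> D" by auto
  have "character f k x = 0" if x: "x \<in> MDbar f D" for x
  proof -
    obtain a where "a \<noteq> 0" "(\<lambda>i. a * x i) \<in> MD f D" using x by (auto simp: MDbar_def)
    then have "of_int a * character f k x = 0"
      using character_MD[OF f D _ k \<open>root_order f k \<notin> D\<close>] by (simp flip: character_scale)
    then show ?thesis using \<open>a \<noteq> 0\<close> by simp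
  qed
  then show "k \<in> char_zeros f (MDbar f D)" using k by (simp add: char_zeros_def)
qed

context saturated_submodule
begin

lemma subset_grp_ring: "M \<subseteq> grp_ring f"
  using submodule by (simp add: is_submodule_def)

lemma zero_mem: "0 \<in> M"
  using submodule by (simp add: is_submodule_def)

lemma add_mem: "x \<in> M \<Longrightarrow> y \<in> M \<Longrightarrow> x + y \<in> M"
  using submodule by (simp add: is_submodule_def)

lemma gmult_mem: "r \<in> grp_ring f \<Longrightarrow> x \<in> M \<Longrightarrow> gmult f r x \<in> M"
  using submodule by (simp add: is_submodule_def)

lemma sum_mem: "(\<And>i. i \<in> A \<Longrightarrow> y i \<in> M) \<Longrightarrow> (\<Sum>i\<in>A. y i) \<in> M"
  by (induction A rule: infinite_finite_induct) (auto simp: zero_mem add_mem)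

lemma scale_mem:
  assumes "x \<in> M"
  shows "(\<lambda>k. c * x k) \<in> M"
proof -
  define r where "r = (\<lambda>j. c * sigma_pow 0 j)"
  have "r \<in> grp_ring f" using f_ge_1 by (simp add: r_def sigma_pow_def grp_ring_def)
  have "lift_poly f r = [:c:]"
    using f_ge_1 by (intro poly_eqI) (auto simp: coeff_lift_poly r_def sigma_pow_def coeff_pCons
        split: nat.split)
  have x: "x = poly_sigma_shift f (lift_poly f x) 0"
    using assms subset_grp_ring by (auto simp: poly_sigma_shift_lift_poly)
  have "gmult f r x = (\<lambda>k. c * x k)"
    by (subst (1 2) x) (simp add: gmult_poly_sigma_shift[OF f_ge_1] \<open>lift_poly f r = [:c:]\<close>
        poly_sigma_shift_smult)
  then show ?thesis using gmult_mem[OF \<open>r \<in> grp_ring f\<close> assms] by simp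
qed

(* the preimage of M under Z[X] -> Z[Gamma], X |-> sigma *)
definition poly_ideal :: "int poly set" where
  "poly_ideal = {u. poly_sigma_shift f u 0 \<in> M}"

lemma poly_ideal_add: "u \<in> poly_ideal \<Longrightarrow> v \<in> poly_ideal \<Longrightarrow> u + v \<in> poly_ideal"
  by (simp add: poly_ideal_def poly_sigma_shift_add add_mem)

lemma poly_sigma_shift_mem:
  assumes "u \<in> poly_ideal"
  shows "poly_sigma_shift f u i \<in> M"
proof -
  have "i mod f < f" using f_ge_1 by simp
  then have "sigma_pow (i mod f) \<in> grp_ring f" by (auto simp: sigma_pow_def grp_ring_def)
  moreover have "gmult f (sigma_pow (i mod f)) (poly_sigma_shift f u 0) = poly_sigma_shift f u i"
    using f_ge_1 by (simp add: gmult_sigma_pow_poly_sigma_shift poly_sigma_shift_mod)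
  ultimately show ?thesis using gmult_mem assms by (metis mem_Collect_eq poly_ideal_def)
qed

lemma poly_ideal_mult:
  assumes "u \<in> poly_ideal"
  shows "q * u \<in> poly_ideal"
  using poly_sigma_shift_mem[OF assms]
  by (auto simp: poly_ideal_def poly_sigma_shift_mult[OF lessI] simp del: sum.lessThan_Suc
      intro!: sum_mem scale_mem)

lemma poly_ideal_diff: "u \<in> poly_ideal \<Longrightarrow> v \<in> poly_ideal \<Longrightarrow> u - v \<in> poly_ideal"
  using poly_ideal_add[of u "[:- 1:] * v"] poly_ideal_mult[of v "[:- 1:]"] by simp

lemma poly_ideal_saturated:
  assumes "smult c u \<in> poly_ideal" and "c \<noteq> 0"
  shows "u \<in> poly_ideal"
  using torsion_free assms poly_sigma_shift_in_grp_ring[of f u 0]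
  by (auto simp: poly_ideal_def quotient_torsion_free_def poly_sigma_shift_smult)

lemma X_pow_minus_one_in_poly_ideal: "monom 1 f - 1 \<in> poly_ideal"
  using poly_sigma_shift_X_pow_minus_one_mult[of f 1 0] zero_mem by (simp add: poly_ideal_def)

lemma lift_poly_in_poly_ideal: "x \<in> M \<Longrightarrow> lift_poly f x \<in> poly_ideal"
  using subset_grp_ring by (auto simp: poly_ideal_def poly_sigma_shift_lift_poly)

definition is_generator :: "int poly \<Rightarrow> bool" where
  "is_generator g \<longleftrightarrow> g \<in> poly_ideal \<and> g \<noteq> 0 \<and>
     (\<forall>u\<in>poly_ideal. \<exists>c q. c \<noteq> 0 \<and> smult c u = g * q)"

lemma ex_generator: "\<exists>g. is_generator g"
proof -
  have "monom 1 f - 1 \<in> poly_ideal \<and> (monom 1 f - 1 :: int poly) \<noteq> 0"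
    using X_pow_minus_one_in_poly_ideal degree_X_pow_minus_one[OF f_ge_1, where 'a = int] f_ge_1
    by auto
  then obtain g where g: "g \<in> poly_ideal" "g \<noteq> 0"
    and min: "\<And>u. u \<in> poly_ideal \<Longrightarrow> u \<noteq> 0 \<Longrightarrow> degree g \<le> degree u"
    using ex_has_least_nat[where P = "\<lambda>u. u \<in> poly_ideal \<and> u \<noteq> 0" and m = degree] by metis
  have "\<exists>c q. c \<noteq> 0 \<and> smult c u = g * q" if u: "u \<in> poly_ideal" for u
  proof -
    define c where "c = lead_coeff g ^ (Suc (degree u) - degree g)"
    obtain q r where qr: "smult c u = g * q + r" and r: "r = 0 \<or> degree r < degree g"
      unfolding c_def using pseudo_division[OF g(2)] by blast
    have "smult c u \<in> poly_ideal" using poly_ideal_mult[OF u, of "[:c:]"] by simp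
    then have "smult c u - q * g \<in> poly_ideal" using poly_ideal_mult[OF g(1)] by (rule poly_ideal_diff)
    then have "r \<in> poly_ideal" by (simp add: qr mult.commute)
    then have "r = 0" using min r by fastforce
    moreover have "c \<noteq> 0" using g(2) by (simp add: c_def)
    ultimately show ?thesis using qr by auto
  qed
  then show ?thesis using g unfolding is_generator_def by blast
qed

lemma char_zeros_iff_generator_root:
  assumes "is_generator g" and k: "k < f"
  shows "k \<in> char_zeros f M \<longleftrightarrow> poly (of_int_poly g) (zeta f ^ k) = 0"
proof
  have g: "g \<in> poly_ideal" and gen: "\<And>u. u \<in> poly_ideal \<Longrightarrow> \<exists>c q. c \<noteq> 0 \<and> smult c u = g * q"
    using assms(1) by (auto simp: is_generator_def)
  assume "k \<in> char_zeros f M"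
  then have "character f k (poly_sigma_shift f g 0) = 0"
    using g by (simp add: char_zeros_def poly_ideal_def)
  then show "poly (of_int_poly g) (zeta f ^ k) = 0"
    by (simp add: character_poly_sigma_shift[OF f_ge_1])
next
  have gen: "\<And>u. u \<in> poly_ideal \<Longrightarrow> \<exists>c q. c \<noteq> 0 \<and> smult c u = g * q"
    using assms(1) by (auto simp: is_generator_def)
  assume root: "poly (of_int_poly g) (zeta f ^ k) = 0"
  have "character f k x = 0" if x: "x \<in> M" for x
  proof -
    obtain c q where "c \<noteq> 0" and cq: "smult c (lift_poly f x) = g * q"
      using gen[OF lift_poly_in_poly_ideal[OF x]] by blast
    have "of_int c * poly (of_int_poly (lift_poly f x)) (zeta f ^ k)
        = poly (of_int_poly g) (zeta f ^ k) * poly (of_int_poly q) (zeta f ^ k)"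
      using arg_cong[OF cq, of "\<lambda>p. poly (of_int_poly p) (zeta f ^ k)"] by (simp add: hom_distribs)
    then have "poly (of_int_poly (lift_poly f x)) (zeta f ^ k) = 0"
      using root \<open>c \<noteq> 0\<close> by simp
    then show ?thesis
      using x subset_grp_ring character_poly_sigma_shift[OF f_ge_1, of k "lift_poly f x"]
      by (auto simp: poly_sigma_shift_lift_poly)
  qed
  then show "k \<in> char_zeros f M" using k by (simp add: char_zeros_def)
qed

lemma generator_dvd_X_pow_minus_one:
  assumes "is_generator g"
  obtains c where "c \<noteq> 0"
    and "of_int_poly g dvd (smult (of_int c) (monom 1 f - 1) :: complex poly)"
proof -
  obtain c q where "c \<noteq> 0" and cq: "smult c (monom 1 f - 1) = g * q"
    using assms X_pow_minus_one_in_poly_ideal by (auto simp: is_generator_def)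
  have "smult (of_int c) (monom 1 f - 1) = (of_int_poly g * of_int_poly q :: complex poly)"
    using arg_cong[OF cq, of "of_int_poly :: _ \<Rightarrow> complex poly"] by (simp add: hom_distribs)
  then have "of_int_poly g dvd (smult (of_int c) (monom 1 f - 1) :: complex poly)" by (rule dvdI)
  with \<open>c \<noteq> 0\<close> show ?thesis by (rule that)
qed

(* The roots of a generator are simple, being roots of X^f - 1, so it divides every polynomial
   vanishing at them. *)
lemma mem_of_char_zeros_vanish:
  assumes y: "y \<in> grp_ring f" and zero: "\<And>k. k \<in> char_zeros f M \<Longrightarrow> character f k y = 0"
  shows "y \<in> M"
proof -
  obtain g where g: "is_generator g" using ex_generator by blast
  obtain c where "c \<noteq> 0"
    and dvd: "of_int_poly g dvd (smult (of_int c) (monom 1 f - 1) :: complex poly)"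
    by (rule generator_dvd_X_pow_minus_one[OF g])
  have "rsquarefree (smult (of_int c) (monom 1 f - 1) :: complex poly)"
    using rsquarefree_X_pow_minus_one[OF f_ge_1] \<open>c \<noteq> 0\<close>
    by (simp add: rsquarefree_def order_smult)
  then have "rsquarefree (of_int_poly g :: complex poly)" using dvd by (rule rsquarefree_dvd)
  moreover have "poly (of_int_poly (lift_poly f y)) z = 0"
    if z: "poly (of_int_poly g) z = 0" for z :: complex
  proof -
    obtain r where r: "smult (of_int c) (monom 1 f - 1) = (of_int_poly g * r :: complex poly)"
      using dvd by (elim dvdE)
    have "of_int c * (z ^ f - 1) = poly (of_int_poly g) z * poly r z"
      using arg_cong[OF r, of "\<lambda>p. poly p z"] by (simp add: poly_monom)
    then have "of_int c * (z ^ f - 1) = 0" using z by simp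
    then have "z ^ f = 1" using \<open>c \<noteq> 0\<close> by simp
    then obtain k where k: "k < f" "z = zeta f ^ k" by (rule root_of_unity_eq_zeta_power[OF f_ge_1])
    then have "k \<in> char_zeros f M" using char_zeros_iff_generator_root[OF g] z by simp
    then show ?thesis
      using zero character_poly_sigma_shift[OF f_ge_1, of k "lift_poly f y"] k
      by (simp add: poly_sigma_shift_lift_poly[OF y])
  qed
  ultimately have "of_int_poly g dvd (of_int_poly (lift_poly f y) :: complex poly)"
    by (rule rsquarefree_dvd_of_roots)
  moreover have "g \<noteq> 0" using g by (simp add: is_generator_def)
  ultimately obtain c' q' where "c' \<noteq> 0" and c'q': "smult c' (lift_poly f y) = g * q'"
    using of_int_poly_dvd_imp_smult_dvd by blast
  have "g \<in> poly_ideal" using g by (simp add: is_generator_def)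
  then have "smult c' (lift_poly f y) \<in> poly_ideal"
    unfolding c'q' mult.commute[of g q'] by (rule poly_ideal_mult)
  then have "lift_poly f y \<in> poly_ideal" using \<open>c' \<noteq> 0\<close> by (rule poly_ideal_saturated)
  then show "y \<in> M" by (simp add: poly_ideal_def poly_sigma_shift_lift_poly[OF y])
qed

lemma eq_char_kernel: "M = {y \<in> grp_ring f. \<forall>k\<in>char_zeros f M. character f k y = 0}"
proof (intro equalityI subsetI)
  fix y
  assume "y \<in> M"
  then show "y \<in> {y \<in> grp_ring f. \<forall>k\<in>char_zeros f M. character f k y = 0}"
    using subset_grp_ring by (auto simp: char_zeros_def)
next
  fix y
  assume "y \<in> {y \<in> grp_ring f. \<forall>k\<in>char_zeros f M. character f k y = 0}"
  then show "y \<in> M" by (intro mem_of_char_zeros_vanish) auto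
qed

end

lemma saturated_submodule_eqI:
  assumes "saturated_submodule f M" and "saturated_submodule f M'"
    and "char_zeros f M = char_zeros f M'"
  shows "M = M'"
  using saturated_submodule.eq_char_kernel[OF assms(1)] saturated_submodule.eq_char_kernel[OF assms(2)]
    assms(3) by simp

section \<open>Galois conjugates of roots of unity\<close>

lemma freshmans_dream_mod_prime:
  fixes x y :: "'a::comm_ring_1"
  assumes "prime p"
  obtains w where "(x + y) ^ p = x ^ p + y ^ p + of_nat p * w"
proof -
  define F where "F k = of_nat (p choose k) * x ^ k * y ^ (p - k)" for k
  have "p \<noteq> 0" using assms by auto
  have "{..p} = insert 0 (insert p {0<..<p})" by auto
  then have "(x + y) ^ p = F 0 + F p + (\<Sum>k\<in>{0<..<p}. F k)"
    using \<open>p \<noteq> 0\<close> by (simp add: binomial_ring F_def[symmetric] add.assoc)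
  also have "F 0 + F p = x ^ p + y ^ p" by (simp add: F_def)
  also have "(\<Sum>k\<in>{0<..<p}. F k)
      = of_nat p * (\<Sum>k\<in>{0<..<p}. of_nat ((p choose k) div p) * x ^ k * y ^ (p - k))"
    unfolding sum_distrib_left
  proof (intro sum.cong refl)
    fix k
    assume "k \<in> {0<..<p}"
    then have "p choose k = p * ((p choose k) div p)"
      using assms by (simp add: dvd_choose_prime)
    then show "F k = of_nat p * (of_nat ((p choose k) div p) * x ^ k * y ^ (p - k))"
      unfolding F_def by (metis (no_types, lifting) mult.assoc of_nat_mult)
  qed
  finally show ?thesis by (rule that)
qed

lemma prime_dvd_power_self_diff:
  fixes a :: int
  assumes "prime p"
  shows "int p dvd a ^ p - a"
proof -
  have nat_case: "int p dvd int b ^ p - int b" for b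
  proof (induction b)
    case 0
    then show ?case using assms by (simp add: prime_gt_0_nat power_0_left)
  next
    case (Suc b)
    obtain w :: int where "(int b + 1) ^ p = int b ^ p + 1 ^ p + of_nat p * w"
      using freshmans_dream_mod_prime[OF assms] by blast
    then have "int (Suc b) ^ p - int (Suc b) = (int b ^ p - int b) + int p * w"
      by (simp add: algebra_simps)
    then show ?case using Suc.IH by (simp only:) (rule dvd_add, simp_all)
  qed
  define b where "b = nat (a mod int p)"
  have "[a = int b] (mod int p)"
    using assms by (simp add: b_def cong_def prime_gt_0_nat)
  then have "[a ^ p - a = int b ^ p - int b] (mod int p)"
    by (intro cong_diff cong_pow)
  then show ?thesis using nat_case[of b] by (simp add: cong_dvd_iff)
qed

lemma frobenius_congruence:
  fixes h :: "int poly"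
  assumes "prime p"
  shows "[:int p:] dvd h ^ p - h \<circ>\<^sub>p monom 1 p"
proof (induction h)
  case 0
  then show ?case using assms by (simp add: power_0_left prime_gt_0_nat)
next
  case (pCons a h)
  define A where "A = [:a:]"
  define B where "B = monom 1 1 * h"
  have "pCons a h = A + B" by (simp add: A_def B_def monom_Suc monom_0 pCons_eq_iff)
  obtain w where w: "(A + B) ^ p = A ^ p + B ^ p + of_nat p * w"
    using freshmans_dream_mod_prime[OF assms] by blast
  have "B ^ p = monom 1 p * h ^ p" by (simp add: B_def power_mult_distrib monom_power)
  moreover have "pCons a h \<circ>\<^sub>p monom 1 p = A + monom 1 p * (h \<circ>\<^sub>p monom 1 p)"
    by (simp add: A_def pcompose_pCons)
  ultimately have eq: "pCons a h ^ p - pCons a h \<circ>\<^sub>p monom 1 p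
      = [:int p:] * w + (A ^ p - A) + monom 1 p * (h ^ p - h \<circ>\<^sub>p monom 1 p)"
    unfolding \<open>pCons a h = A + B\<close> w by (simp add: of_nat_poly algebra_simps)
  have "[:int p:] dvd A ^ p - A"
  proof -
    obtain c where "a ^ p - a = int p * c"
      using prime_dvd_power_self_diff[OF assms, of a] by (elim dvdE)
    then have "A ^ p - A = [:int p:] * [:c:]" by (simp add: A_def poly_const_pow)
    then show ?thesis by simp
  qed
  then show ?case
    unfolding eq using pCons.IH by (intro dvd_add dvd_mult dvd_triv_left)
qed

lemma primitive_dvd_of_dvd_smult:
  fixes m u :: "int poly"
  assumes "content m = 1" and "c \<noteq> 0" and "m dvd smult c u"
  shows "m dvd u"
proof -
  have "m dvd primitive_part (smult c u)"
    using primitive_part_dvd_primitive_partI[OF assms(3)] assms(1) by (simp add: primitive_part_prim)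
  then have "m dvd smult (sgn c) (primitive_part u)" by (simp add: primitive_part_smult)
  then have "m dvd smult (sgn c) (smult (sgn c) (primitive_part u))" by (rule dvd_smult)
  also have "smult (sgn c) (smult (sgn c) (primitive_part u)) = primitive_part u"
    using assms(2) by (simp add: sgn_if)
  also have "primitive_part u dvd u"
    by (metis content_times_primitive_part dvd_smult dvd_refl)
  finally show ?thesis .
qed

lemma least_degree_root_poly_dvd:
  fixes z :: complex and m :: "int poly"
  assumes "content m = 1" and root: "poly (of_int_poly m) z = 0"
    and least: "\<And>u. u \<noteq> 0 \<Longrightarrow> poly (of_int_poly u) z = 0 \<Longrightarrow> degree m \<le> degree u"
    and u: "poly (of_int_poly u) z = 0"
  shows "m dvd u"
proof -
  have "m \<noteq> 0" using assms(1) by auto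
  define c where "c = lead_coeff m ^ (Suc (degree u) - degree m)"
  obtain s r where sr: "smult c u = m * s + r" and r: "r = 0 \<or> degree r < degree m"
    unfolding c_def using pseudo_division[OF \<open>m \<noteq> 0\<close>] by blast
  have "poly (of_int_poly r) z = 0"
    using arg_cong[OF sr, of "\<lambda>p. poly (of_int_poly p) z"] u root by (simp add: hom_distribs)
  then have "m dvd smult c u" using least[of r] r sr by fastforce
  moreover have "c \<noteq> 0" using \<open>m \<noteq> 0\<close> by (simp add: c_def)
  ultimately show ?thesis using assms(1) by (blast intro: primitive_dvd_of_dvd_smult)
qed

lemma monic_minimal_int_poly:
  fixes z :: complex
  assumes "monic q" and "poly (of_int_poly q) z = 0"
  obtains m where "monic m" and "poly (of_int_poly m) z = 0"
    and "\<forall>u. poly (of_int_poly u) z = 0 \<longrightarrow> m dvd u"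
proof -
  have "q \<noteq> 0 \<and> poly (of_int_poly q) z = 0" using assms by auto
  then obtain m0 where m0: "m0 \<noteq> 0" "poly (of_int_poly m0) z = 0"
    and least: "\<And>u. u \<noteq> 0 \<and> poly (of_int_poly u) z = 0 \<Longrightarrow> degree m0 \<le> degree u"
    using ex_has_least_nat[where P = "\<lambda>u. u \<noteq> 0 \<and> poly (of_int_poly u) z = 0" and m = degree]
    by metis
  define m1 where "m1 = primitive_part m0"
  have "poly (of_int_poly (smult (content m0) m1)) z = 0" using m0(2) by (simp add: m1_def)
  then have root: "poly (of_int_poly m1) z = 0" using m0(1) by (simp add: hom_distribs)
  have content: "content m1 = 1" using m0(1) by (simp add: m1_def)
  have least1: "degree m1 \<le> degree u" if "u \<noteq> 0" "poly (of_int_poly u) z = 0" for u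
    using least[of u] that by (simp add: m1_def)
  have dvd: "m1 dvd u" if "poly (of_int_poly u) z = 0" for u
    by (rule least_degree_root_poly_dvd[OF content root least1 that])
  obtain s where "q = m1 * s" using dvd[OF assms(2)] by (elim dvdE)
  then have "lead_coeff m1 * lead_coeff s = 1" using assms(1) by (simp add: lead_coeff_mult)
  then have unit: "lead_coeff m1 * lead_coeff m1 = 1" using zmult_eq_1_iff by auto
  define m where "m = smult (lead_coeff m1) m1"
  have "m1 = m * [:lead_coeff m1:]" using unit by (simp add: m_def)
  then have "m dvd m1" by (rule dvdI)
  have "monic m" using unit by (auto simp: m_def)
  moreover have "poly (of_int_poly m) z = 0" using root by (simp add: m_def hom_distribs)
  moreover have "\<forall>u. poly (of_int_poly u) z = 0 \<longrightarrow> m dvd u"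
  proof (intro allI impI)
    fix u
    assume "poly (of_int_poly u) z = 0"
    with \<open>m dvd m1\<close> show "m dvd u" by (blast intro: dvd_trans dvd)
  qed
  ultimately show ?thesis by (rule that)
qed

lemma diff_dvd_power_diff: "x - y dvd x ^ n - y ^ n" for x y :: "'a::comm_ring_1"
proof (induction n)
  case (Suc n)
  have "x ^ Suc n - y ^ Suc n = x * (x ^ n - y ^ n) + (x - y) * y ^ n"
    by (simp add: algebra_simps)
  then show ?case using Suc.IH by simp
qed simp

context poly_mod
begin

lemma dvdm_of_const_dvd: "[:m:] dvd f \<Longrightarrow> g dvdm f"
  unfolding dvdm_def by (auto intro!: exI[of _ 0] elim!: dvdE)

lemma dvdm_diff: "f dvdm g \<Longrightarrow> f dvdm h \<Longrightarrow> f dvdm g - h"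
  using dvdm_add[of f g "- h"] by simp

(* Differentiating X^n - 1 = g h gives n X^(n-1) = h g' modulo g. *)
lemma factor_dvdm_const_of_dvdm_power:
  assumes "n \<ge> 1" and gh: "monom 1 n - 1 = g * h" and "g dvdm h ^ k"
  shows "g dvdm [:int n ^ k:]"
proof -
  define A where "A = monom (int n) (n - 1)"
  have "A = g * pderiv h + h * pderiv g"
    using arg_cong[OF gh, of pderiv] by (simp add: A_def pderiv_diff pderiv_monom pderiv_mult)
  then have "g dvd A - h * pderiv g" by simp
  then have "g dvdm A ^ k - (h * pderiv g) ^ k"
    using diff_dvd_power_diff by (meson dvd_imp_dvdm dvd_trans)
  moreover have "g dvdm (h * pderiv g) ^ k"
    using assms(3) by (simp add: power_mult_distrib dvdm_factor)
  ultimately have "g dvdm A ^ k" using dvdm_add by fastforce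
  then have "g dvdm A ^ k * monom 1 k" by (rule dvdm_factor)
  also have "A ^ k * monom 1 k = [:int n ^ k:] * monom 1 (n * k)"
    using assms(1) by (simp add: A_def monom_power mult_monom smult_monom algebra_simps
        flip: mult_Suc[of "n - 1" k])
  finally have "g dvdm [:int n ^ k:] * monom 1 (n * k)" .
  moreover have "g dvdm [:int n ^ k:] * (monom 1 (n * k) - 1)"
  proof -
    have "(monom 1 n - 1 :: int poly) dvd (monom 1 n) ^ k - 1 ^ k" by (rule diff_dvd_power_diff)
    then have "g * h dvd monom 1 (n * k) - 1" by (simp add: gh monom_power)
    then have "g dvd monom 1 (n * k) - 1" by (rule dvd_mult_left)
    then show ?thesis by (intro dvd_imp_dvdm dvd_mult)
  qed
  ultimately have "g dvdm [:int n ^ k:] * monom 1 (n * k) - [:int n ^ k:] * (monom 1 (n * k) - 1)"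
    by (rule dvdm_diff)
  then show ?thesis by (simp add: algebra_simps)
qed

end

(* Otherwise h(z^p) = 0 for X^n - 1 = m h, so m divides h(X^p), which is h^p modulo p; the
   previous lemma then gives m | n^p modulo p, impossible for a monic m of positive degree as p
   does not divide n. *)
lemma minimal_poly_root_power_prime:
  fixes z :: complex and m :: "int poly"
  assumes n: "n \<ge> 1" and z: "z ^ n = 1" and p: "prime p" and "\<not> p dvd n"
    and m: "monic m" "poly (of_int_poly m) z = 0"
    and min: "\<And>u. poly (of_int_poly u) z = 0 \<Longrightarrow> m dvd u"
  shows "poly (of_int_poly m) (z ^ p) = 0"
proof (rule ccontr)
  assume nz: "poly (of_int_poly m) (z ^ p) \<noteq> 0"
  interpret poly_mod_prime "int p" using p by unfold_locales simp
  obtain h where h: "monom 1 n - 1 = m * h"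
    using min[of "monom 1 n - 1"] z by (auto simp: hom_distribs poly_monom elim!: dvdE)
  have "poly (of_int_poly (monom 1 n - 1)) (z ^ p) = 0"
    using z by (simp add: hom_distribs poly_monom flip: power_mult) (simp add: power_mult mult.commute[of p])
  then have "poly (of_int_poly h) (z ^ p) = 0" using nz by (simp add: h hom_distribs)
  then have "m dvd h \<circ>\<^sub>p monom 1 p"
    by (intro min) (simp add: hom_distribs poly_pcompose poly_monom)
  then have "m dvdm h \<circ>\<^sub>p monom 1 p" by (rule dvd_imp_dvdm)
  moreover have "m dvdm h ^ p - h \<circ>\<^sub>p monom 1 p"
    using frobenius_congruence[OF p] by (rule dvdm_of_const_dvd)
  ultimately have "m dvdm (h ^ p - h \<circ>\<^sub>p monom 1 p) + h \<circ>\<^sub>p monom 1 p"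
    by (intro dvdm_add)
  then have "m dvdm h ^ p" by simp
  then have "m dvdm [:int n ^ p:]" by (rule factor_dvdm_const_of_dvdm_power[OF n h])
  obtain u v where uv: "u * int p + v * int n ^ p = 1"
    using \<open>\<not> p dvd n\<close> p bezout_int[of "int p" "int n ^ p"]
    by (auto simp: prime_imp_coprime coprime_power_right_iff)
  have "m dvdm [:int p:] * [:u:]" by (rule dvdm_of_const_dvd) simp
  moreover have "m dvdm [:int n ^ p:] * [:v:]" using \<open>m dvdm [:int n ^ p:]\<close> by (rule dvdm_factor)
  ultimately have "m dvdm [:int p:] * [:u:] + [:int n ^ p:] * [:v:]" by (rule dvdm_add)
  then have "m dvdm [:1:]" using uv by (simp add: mult.commute)
  moreover have "degree m > 0"
  proof (rule ccontr)
    assume "\<not> degree m > 0"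
    then have "degree m = 0" by simp
    then have "m = [:1:]" using m(1) degree_0_id[of m] by simp
    then show False using m(2) by simp
  qed
  ultimately have "1 mod int p = 0" using m(1) by (intro monic_dvdm_constant)
  then show False using p prime_gt_1_nat by simp
qed

lemma root_power_prime:
  fixes z :: complex
  assumes "n \<ge> 1" and "z ^ n = 1" and "prime p" and "\<not> p dvd n"
    and "poly (of_int_poly g) z = 0"
  shows "poly (of_int_poly g) (z ^ p) = 0"
proof -
  have "monic (monom 1 n - 1 :: int poly)" by (rule monic_X_pow_minus_one[OF assms(1)])
  moreover have "poly (of_int_poly (monom 1 n - 1)) z = 0"
    using assms(2) by (simp add: hom_distribs poly_monom)
  ultimately obtain m where m: "monic m" "poly (of_int_poly m) z = 0"
    and "\<forall>u. poly (of_int_poly u) z = 0 \<longrightarrow> m dvd u"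
    by (rule monic_minimal_int_poly)
  then have min: "\<And>u. poly (of_int_poly u) z = 0 \<Longrightarrow> m dvd u" by blast
  have "poly (of_int_poly m) (z ^ p) = 0"
    by (rule minimal_poly_root_power_prime[OF assms(1-4) m min])
  moreover obtain s where "g = m * s" using min[OF assms(5)] by (elim dvdE)
  ultimately show ?thesis by (simp add: hom_distribs)
qed

lemma root_power_coprime:
  fixes z :: complex
  assumes "n \<ge> 1" and "z ^ n = 1" and "poly (of_int_poly g) z = 0"
  shows "Rings.coprime a n \<Longrightarrow> poly (of_int_poly g) (z ^ a) = 0"
proof (induction a rule: less_induct)
  case (less a)
  consider "a = 0" | "a = 1" | p b where "prime p" "a = p * b" "b < a"
  proof (cases "a \<le> 1")
    case False
    then obtain p where p: "prime p" "p dvd a" using prime_factor_nat[of a] by auto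
    then obtain b where "a = p * b" by (elim dvdE)
    moreover have "b > 0" using False \<open>a = p * b\<close> by (cases b) auto
    then have "b < a" using \<open>a = p * b\<close> prime_gt_1_nat[OF p(1)] by (simp add: n_less_m_mult_n)
    ultimately show thesis using p(1) that(3) by blast
  next
    case True
    then have "a = 0 \<or> a = 1" by auto
    then show thesis using that(1,2) by blast
  qed
  then show ?case
  proof cases
    case 1
    then have "z = 1" using less.prems assms(2) by simp
    then show ?thesis using 1 assms(3) by simp
  next
    case 2
    then show ?thesis using assms(3) by simp
  next
    case (3 p b)
    have "Rings.coprime b n" using less.prems 3 by simp
    then have "poly (of_int_poly g) (z ^ b) = 0" using less.IH \<open>b < a\<close> by blast
    moreover have "\<not> p dvd n"
      using less.prems 3 coprime_common_divisor[of a n p] not_prime_unit by auto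
    moreover have "(z ^ b) ^ n = 1" using assms(2) by (metis power_mult power_one mult.commute)
    ultimately have "poly (of_int_poly g) ((z ^ b) ^ p) = 0"
      using root_power_prime[OF assms(1) _ \<open>prime p\<close>] by blast
    then show ?thesis by (simp add: 3 power_mult mult.commute)
  qed
qed

lemma zeta_power_root_order: "(zeta f ^ k) ^ root_order f k = 1"
proof -
  have "k * root_order f k = k div gcd k f * f"
    by (simp add: root_order_def div_mult_swap dvd_div_mult)
  then show ?thesis by (simp flip: power_mult add: power_mult[of _ f] mult.commute)
qed

lemma zeta_power_same_root_order:
  assumes "f \<ge> 1" and "root_order f k = root_order f k'"
  obtains a where "Rings.coprime a (root_order f k)" and "(zeta f ^ k) ^ a = zeta f ^ k'"
proof -
  define e where "e = gcd k f"
  define d where "d = root_order f k"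
  have "e > 0" using assms(1) by (simp add: e_def)
  have f: "f = e * d" by (simp add: e_def d_def root_order_def)
  have "d > 0" using root_order_pos[OF assms(1)] by (simp add: d_def Suc_le_eq)
  have "gcd k' f * d = f" using assms(2) by (simp add: d_def root_order_def)
  then have "gcd k' f = e" using f \<open>d > 0\<close> by simp
  define u u' where "u = k div e" and "u' = k' div e"
  have k: "k = e * u" by (simp add: u_def e_def)
  have k': "k' = e * u'" using gcd_dvd1[of k' f] \<open>gcd k' f = e\<close> by (simp add: u'_def)
  have "Rings.coprime u d" "Rings.coprime u' d"
    using div_gcd_coprime[of k f] div_gcd_coprime[of k' f] assms(1) \<open>gcd k' f = e\<close>
    by (simp_all add: u_def u'_def d_def root_order_def e_def)
  obtain v where v: "[u * v = 1] (mod d)" using cong_solve_coprime_nat[OF \<open>Rings.coprime u d\<close>] by auto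
  then have "[v * u = Suc 0] (mod d)" by (simp add: mult.commute)
  then have "Rings.coprime v d" using coprime_iff_invertible_nat[of v d] by blast
  then have "Rings.coprime (v * u') d" using \<open>Rings.coprime u' d\<close> by simp
  moreover have "(zeta f ^ k) ^ (v * u') = zeta f ^ k'"
  proof -
    have "[u * v * u' = 1 * u'] (mod d)" using v by (rule cong_mult) simp
    then have "(e * (u * v * u')) mod f = (e * u') mod f"
      by (simp add: f cong_def mod_mult_mult1)
    then have "zeta f ^ (k * (v * u')) = zeta f ^ k'"
      using zeta_power_mod[of f] by (metis k k' mult.assoc)
    then show ?thesis by (simp add: power_mult)
  qed
  ultimately show ?thesis unfolding d_def by (rule that)
qed

lemma poly_zeta_power_same_root_order:
  assumes "f \<ge> 1" and "root_order f k = root_order f k'"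
    and "poly (of_int_poly g) (zeta f ^ k) = 0"
  shows "poly (of_int_poly g) (zeta f ^ k') = 0"
proof -
  obtain a where "Rings.coprime a (root_order f k)" and "(zeta f ^ k) ^ a = zeta f ^ k'"
    using zeta_power_same_root_order[OF assms(1,2)] by blast
  then show ?thesis
    using root_power_coprime[OF root_order_pos[OF assms(1)] zeta_power_root_order assms(3)] by metis
qed

context saturated_submodule
begin

lemma char_zeros_closed_under_root_order:
  assumes "k \<in> char_zeros f M" and "k' < f" and "root_order f k' = root_order f k"
  shows "k' \<in> char_zeros f M"
proof -
  obtain g where g: "is_generator g" using ex_generator by blast
  have "k < f" using assms(1) by (simp add: char_zeros_def)
  then have "poly (of_int_poly g) (zeta f ^ k) = 0"
    using assms(1) char_zeros_iff_generator_root[OF g] by simp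
  then have "poly (of_int_poly g) (zeta f ^ k') = 0"
    using poly_zeta_power_same_root_order[OF f_ge_1 assms(3)[symmetric]] by simp
  then show ?thesis using char_zeros_iff_generator_root[OF g assms(2)] by simp
qed

lemma char_zeros_eq_root_order_preimage:
  "char_zeros f M = {k. k < f \<and> root_order f k \<notin> root_order f ` ({..<f} - char_zeros f M)}"
  using char_zeros_closed_under_root_order by (fastforce simp: char_zeros_def)

end

theorem corollaryA2:
  fixes f :: nat and M :: "(nat \<Rightarrow> int) set"
  assumes "f \<ge> 1"
  shows "(is_submodule f M \<and> quotient_torsion_free f M) \<longleftrightarrow>
         (\<exists>D. D \<subseteq> {d. 0 < d \<and> d dvd f} \<and> M = MDbar f D)"
proof
  assume "is_submodule f M \<and> quotient_torsion_free f M"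
  then interpret saturated_submodule f M using assms by unfold_locales auto
  define D where "D = root_order f ` ({..<f} - char_zeros f M)"
  have D: "D \<subseteq> {d. 0 < d \<and> d dvd f}"
    using root_order_pos[OF assms] root_order_dvd by (auto simp: D_def Suc_le_eq)
  have "char_zeros f M = {k. k < f \<and> root_order f k \<notin> D}"
    unfolding D_def by (rule char_zeros_eq_root_order_preimage)
  also have "\<dots> = char_zeros f (MDbar f D)" by (rule char_zeros_MDbar[OF assms D, symmetric])
  finally have "char_zeros f M = char_zeros f (MDbar f D)" .
  with saturated_submodule_axioms saturated_submodule_MDbar[OF assms D]
  have "M = MDbar f D" by (rule saturated_submodule_eqI)
  then show "\<exists>D. D \<subseteq> {d. 0 < d \<and> d dvd f} \<and> M = MDbar f D" using D by blast
next
  assume "\<exists>D. D \<subseteq> {d. 0 < d \<and> d dvd f} \<and> M = MDbar f D"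
  then show "is_submodule f M \<and> quotient_torsion_free f M"
    using saturated_submodule_MDbar[OF assms] by (auto simp: saturated_submodule_def)
qed

end
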